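(* For every c.e. transitive relation $\prec$ on $\omega$ there is a computable strict partial order $\sqsubset$ on $\omega$ such that the spaces of ideals $\mathcal{I}(\prec)$ and $\mathcal{I}(\sqsubset)$ are computably homeomorphic.
   Context: For a transitive relation $\prec$ on a set $S$, an ideal is a set $I\subseteq S$ that is non-empty, a lower set ($b\prec a\in I$ implies $b\in I$), and directed (for all $a,b\in I$ there is $c\in I$ with $a\prec c$ and $b\prec c$). $\mathcal{I}(\prec)$ is the set of all ideals with the topology generated by the basic open sets $[n]_\prec=\{I\in\mathcal{I}(\prec)\mid n\in I\}$, $n\in S$; it is regarded as an effective space with these basic open sets numbered by $n$. An effective space is a pair $(X,\beta)$ with $X$ a countably based $T_0$ space and $\beta:\omega\to P(X)$ a numbering of a base such that $\beta(i)\cap\beta(j)=\bigcup\beta(A_{ij})$ for a uniformly c.e. family of sets $A_{ij}$. A function $f:(X,\beta)\to(Y,\gamma)$ is computable if there is a uniformly c.e. family $(B_n)$ with $f^{-1}(\gamma(n))=\bigcup\beta(B_n)$ for all $n$; a computable homeomorphism is a homeomorphism such that it and its inverse are computable. *)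

theory Defs
  imports "HOL-Analysis.Analysis" "HOL-Library.Nat_Bijection"
begin

datatype recf = Zero | Succ | Proj nat | Cn recf "recf list" | Pr recf recf | Mn recf

inductive eval :: "recf \<Rightarrow> nat list \<Rightarrow> nat \<Rightarrow> bool" where
  eval_Zero: "eval Zero xs 0"
| eval_Succ: "eval Succ (x # xs) (Suc x)"
| eval_Proj: "i < length xs \<Longrightarrow> eval (Proj i) xs (xs ! i)"
| eval_Cn: "length ys = length gs \<Longrightarrow> (\<forall>i<length gs. eval (gs ! i) xs (ys ! i))
            \<Longrightarrow> eval f ys z \<Longrightarrow> eval (Cn f gs) xs z"
| eval_Pr0: "eval f xs y \<Longrightarrow> eval (Pr f g) (0 # xs) y"
| eval_PrS: "eval (Pr f g) (n # xs) y \<Longrightarrow> eval g (n # y # xs) z \<Longrightarrow> eval (Pr f g) (Suc n # xs) z"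
| eval_Mn: "eval f (n # xs) 0 \<Longrightarrow> (\<forall>m<n. \<exists>y. eval f (m # xs) y \<and> y \<noteq> 0)
            \<Longrightarrow> eval (Mn f) xs n"

definition ce_set :: "nat set \<Rightarrow> bool" where
  "ce_set A \<longleftrightarrow> (\<exists>f. \<forall>n. n \<in> A \<longleftrightarrow> (\<exists>y. eval f [n] y))"

definition computable_set :: "nat set \<Rightarrow> bool" where
  "computable_set A \<longleftrightarrow> (\<exists>f. \<forall>n. eval f [n] (if n \<in> A then 1 else 0))"

definition rel_code :: "(nat \<Rightarrow> nat \<Rightarrow> bool) \<Rightarrow> nat set" where
  "rel_code R = {prod_encode (a, b) | a b. R a b}"

definition ce_rel :: "(nat \<Rightarrow> nat \<Rightarrow> bool) \<Rightarrow> bool" where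
  "ce_rel R \<longleftrightarrow> ce_set (rel_code R)"

definition computable_rel :: "(nat \<Rightarrow> nat \<Rightarrow> bool) \<Rightarrow> bool" where
  "computable_rel R \<longleftrightarrow> computable_set (rel_code R)"

definition uniformly_ce :: "(nat \<Rightarrow> nat set) \<Rightarrow> bool" where
  "uniformly_ce B \<longleftrightarrow> ce_set {prod_encode (n, m) | n m. m \<in> B n}"

definition transitive_rel :: "(nat \<Rightarrow> nat \<Rightarrow> bool) \<Rightarrow> bool" where
  "transitive_rel R \<longleftrightarrow> (\<forall>a b c. R a b \<longrightarrow> R b c \<longrightarrow> R a c)"

definition strict_partial_order :: "(nat \<Rightarrow> nat \<Rightarrow> bool) \<Rightarrow> bool" where
  "strict_partial_order R \<longleftrightarrow> (\<forall>a. \<not> R a a) \<and> transitive_rel R"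

definition is_ideal :: "(nat \<Rightarrow> nat \<Rightarrow> bool) \<Rightarrow> nat set \<Rightarrow> bool" where
  "is_ideal R I \<longleftrightarrow> I \<noteq> {} \<and> (\<forall>a b. a \<in> I \<longrightarrow> R b a \<longrightarrow> b \<in> I)
     \<and> (\<forall>a\<in>I. \<forall>b\<in>I. \<exists>c\<in>I. R a c \<and> R b c)"

definition ideals :: "(nat \<Rightarrow> nat \<Rightarrow> bool) \<Rightarrow> nat set set" where
  "ideals R = {I. is_ideal R I}"

definition basic :: "(nat \<Rightarrow> nat \<Rightarrow> bool) \<Rightarrow> nat \<Rightarrow> nat set set" where
  "basic R n = {I \<in> ideals R. n \<in> I}"

definition ideal_topology :: "(nat \<Rightarrow> nat \<Rightarrow> bool) \<Rightarrow> nat set topology" where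
  "ideal_topology R = topology_generated_by (range (basic R))"

definition computable_map ::
  "(nat \<Rightarrow> nat \<Rightarrow> bool) \<Rightarrow> (nat \<Rightarrow> nat \<Rightarrow> bool) \<Rightarrow> (nat set \<Rightarrow> nat set) \<Rightarrow> bool" where
  "computable_map R S f \<longleftrightarrow> (\<exists>B. uniformly_ce B \<and>
     (\<forall>n. {I \<in> ideals R. f I \<in> basic S n} = (\<Union>i\<in>B n. basic R i)))"

definition computably_homeomorphic :: "(nat \<Rightarrow> nat \<Rightarrow> bool) \<Rightarrow> (nat \<Rightarrow> nat \<Rightarrow> bool) \<Rightarrow> bool" where
  "computably_homeomorphic R S \<longleftrightarrow> (\<exists>f g.
     homeomorphic_maps (ideal_topology R) (ideal_topology S) f g \<and>
     computable_map R S f \<and> computable_map S R g)"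

end

theory Submission
  imports Defs
begin

(* Let f be a partial recursive function whose domain codes the relation, and write a <_t b
   when the computation of f on the code of (a, b) halts with every unbounded search cut
   off after t candidates. Each <_t is decidable, <_t grows with t, and the union of all
   <_t is the given relation.

   The new order lives on codes x of pairs (F_x, s_x) of a nonempty finite set and a stage;
   its defining clauses only involve <_(s_x), <_(s_y) and bounded quantifiers, so it is
   computable, and the stage strictly increases, so it is irreflexive. An ideal I of the
   given relation corresponds to the ideal of all codes x with F_x contained in I, and an
   ideal J of the new order to the union of the F_x, x in J. Under the first map the
   preimage of the basic open set of x is the union of the basic open sets of the upper
   bounds of F_x; under the second map the preimage of the basic open set of a is the union
   of the basic open sets of the codes x with a in F_x. Both index sets are c.e. uniformly
   in x resp. a, so both maps are computable. *)

section \<open>Step-bounded evaluation of partial recursive functions\<close>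

inductive_cases eval_ZeroE: "eval Zero xs y"
inductive_cases eval_SuccE: "eval Succ xs y"
inductive_cases eval_ProjE: "eval (Proj i) xs y"
inductive_cases eval_CnE: "eval (Cn f gs) xs y"
inductive_cases eval_Pr0E: "eval (Pr f g) (0 # xs) y"
inductive_cases eval_PrSE: "eval (Pr f g) (Suc n # xs) y"
inductive_cases eval_MnE: "eval (Mn f) xs y"

lemma eval_deterministic: "eval f xs y \<Longrightarrow> eval f xs z \<Longrightarrow> y = z"
proof (induction arbitrary: z rule: eval.induct)
  case (eval_Cn ys gs xs f y)
  from eval_Cn.prems obtain ys' where "length ys' = length gs"
    and "\<forall>i<length gs. eval (gs ! i) xs (ys' ! i)" and "eval f ys' z"
    by (erule eval_CnE)
  moreover have "ys = ys'"
    by (rule nth_equalityI) (use eval_Cn.hyps(1) eval_Cn.IH(1) calculation in auto)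
  ultimately show ?case using eval_Cn.IH(2) by blast
next
  case (eval_PrS f g n xs y z')
  then show ?case by (blast elim: eval_PrSE)
next
  case (eval_Mn f n xs)
  from eval_Mn.prems have "eval f (z # xs) 0" and "\<forall>m<z. \<exists>y. eval f (m # xs) y \<and> y \<noteq> 0"
    by (blast elim: eval_MnE)+
  with eval_Mn.IH show ?case
    by (metis linorder_neqE_nat)
qed (blast elim: eval_ZeroE eval_SuccE eval_ProjE eval_Pr0E)+

text \<open>\<open>bounded_search F n\<close> scans \<open>F 0, \<dots>, F (n - 1)\<close>, where \<open>F j\<close> is the result of a
  sub-computation encoded as in \<open>eval_bounded\<close> below (\<open>0\<close>: unfinished, \<open>Suc v\<close>: value
  \<open>v\<close>). It returns \<open>Suc (Suc j)\<close> if \<open>j\<close> is the first index with value \<open>0\<close>, \<open>1\<close> if an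
  unfinished sub-computation comes first, and \<open>0\<close> if all scanned values are positive.\<close>

fun bounded_search :: "(nat \<Rightarrow> nat) \<Rightarrow> nat \<Rightarrow> nat" where
  "bounded_search F 0 = 0"
| "bounded_search F (Suc j) =
    (if bounded_search F j \<noteq> 0 then bounded_search F j
     else if F j = 1 then Suc (Suc j) else if F j = 0 then 1 else 0)"

lemma bounded_search_eq_0_iff: "bounded_search F n = 0 \<longleftrightarrow> (\<forall>i<n. 2 \<le> F i)"
  by (induction n) (auto simp: less_Suc_eq)

lemma bounded_search_eq_iff:
  "bounded_search F n = Suc (Suc j) \<longleftrightarrow> j < n \<and> F j = 1 \<and> (\<forall>i<j. 2 \<le> F i)"
proof (induction n)
  case (Suc n)
  show ?case
  proof (cases "bounded_search F n = 0")
    case True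
    then show ?thesis
      by (auto simp: bounded_search_eq_0_iff less_Suc_eq)
  next
    case False
    then show ?thesis
      using Suc.IH by (auto simp: bounded_search_eq_0_iff less_Suc_eq)
  qed
qed simp

text \<open>\<open>eval_bounded f s xs\<close> is \<open>Suc y\<close> if \<open>f\<close> returns \<open>y\<close> on \<open>xs\<close> when every
  unbounded search is cut off after \<open>s\<close> candidates, and \<open>0\<close> otherwise. The encoding
  in \<open>nat\<close> rather than \<open>nat option\<close> makes it a total recursive function of \<open>s\<close> and
  \<open>xs\<close>.\<close>

fun eval_bounded :: "recf \<Rightarrow> nat \<Rightarrow> nat list \<Rightarrow> nat" where
  "eval_bounded Zero s xs = 1"
| "eval_bounded Succ s xs = (case xs of [] \<Rightarrow> 0 | x # _ \<Rightarrow> x + 2)"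
| "eval_bounded (Proj i) s xs = (if i < length xs then xs ! i + 1 else 0)"
| "eval_bounded (Cn f gs) s xs =
    (if \<forall>g\<in>set gs. eval_bounded g s xs \<noteq> 0
     then eval_bounded f s (map (\<lambda>g. eval_bounded g s xs - 1) gs) else 0)"
| "eval_bounded (Pr f g) s xs = (case xs of [] \<Rightarrow> 0 | n # ys \<Rightarrow>
    rec_nat (eval_bounded f s ys)
      (\<lambda>m p. if p = 0 then 0 else eval_bounded g s (m # (p - 1) # ys)) n)"
| "eval_bounded (Mn f) s xs = bounded_search (\<lambda>j. eval_bounded f s (j # xs)) s - 1"

lemma eval_bounded_mono:
  "eval_bounded f s xs = Suc y \<Longrightarrow> s \<le> s' \<Longrightarrow> eval_bounded f s' xs = Suc y"
proof (induction f arbitrary: xs y)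
  case (Cn f gs)
  from Cn.prems have nonzero: "\<forall>g\<in>set gs. eval_bounded g s xs \<noteq> 0"
    by (auto split: if_splits)
  have same: "eval_bounded g s' xs = eval_bounded g s xs" if "g \<in> set gs" for g
    using Cn.IH(2)[OF that] Cn.prems(2) nonzero that not0_implies_Suc by metis
  show ?case
    using Cn.prems Cn.IH(1) nonzero by (simp add: same cong: map_cong)
next
  case (Pr f g)
  then obtain n ys where xs: "xs = n # ys" by (auto split: list.splits)
  let ?r = "\<lambda>s. rec_nat (eval_bounded f s ys)
              (\<lambda>m p. if p = 0 then 0 else eval_bounded g s (m # (p - 1) # ys))"
  have "?r s n = Suc y \<Longrightarrow> ?r s' n = Suc y" for y
  proof (induction n arbitrary: y)
    case (Suc n)
    then obtain y' where "?r s n = Suc y'" by (auto split: if_splits simp: gr0_conv_Suc)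
    with Suc show ?case using Pr.IH(2) Pr.prems(2) by (auto split: if_splits)
  qed (use Pr.IH(1) Pr.prems(2) in simp)
  then show ?case using Pr.prems(1) by (simp add: xs)
next
  case (Mn f)
  let ?F = "\<lambda>s j. eval_bounded f s (j # xs)"
  from Mn.prems have "bounded_search (?F s) s = Suc (Suc y)" by simp
  then have "y < s" "?F s y = 1" "\<forall>i<y. 2 \<le> ?F s i"
    by (auto simp: bounded_search_eq_iff)
  moreover have "?F s' i = ?F s i" if "?F s i \<noteq> 0" for i
    using Mn.IH Mn.prems(2) that not0_implies_Suc by metis
  ultimately have "bounded_search (?F s') s' = Suc (Suc y)"
    using Mn.prems(2) by (auto simp: bounded_search_eq_iff)
  then show ?case by simp
qed (auto split: list.splits if_splits)

lemma eval_bounded_sound: "eval_bounded f s xs = Suc y \<Longrightarrow> eval f xs y"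
proof (induction f arbitrary: xs y)
  case Succ
  then show ?case by (auto split: list.splits intro: eval_Succ)
next
  case (Proj i)
  then show ?case by (auto split: if_splits intro: eval_Proj)
next
  case (Cn f gs)
  from Cn.prems have nonzero: "\<forall>g\<in>set gs. eval_bounded g s xs \<noteq> 0"
    by (auto split: if_splits)
  let ?ys = "map (\<lambda>g. eval_bounded g s xs - 1) gs"
  have "eval (gs ! i) xs (?ys ! i)" if "i < length gs" for i
    using Cn.IH(2)[of "gs ! i"] nonzero that by (simp add: gr0_conv_Suc)
  moreover have "eval f ?ys y"
    using Cn.IH(1) Cn.prems nonzero by simp
  ultimately show ?case by (intro eval_Cn) auto
next
  case (Pr f g)
  then obtain n ys where xs: "xs = n # ys" by (auto split: list.splits)
  let ?r = "rec_nat (eval_bounded f s ys)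
              (\<lambda>m p. if p = 0 then 0 else eval_bounded g s (m # (p - 1) # ys))"
  have "?r n = Suc y \<Longrightarrow> eval (Pr f g) (n # ys) y" for y
  proof (induction n arbitrary: y)
    case (Suc n)
    then obtain y' where "?r n = Suc y'"
      by (auto split: if_splits simp: gr0_conv_Suc)
    with Suc show ?case using Pr.IH(2) by (auto intro: eval_PrS split: if_splits)
  qed (use Pr.IH(1) in \<open>simp add: eval_Pr0\<close>)
  then show ?case using Pr.prems by (simp add: xs)
next
  case (Mn f)
  let ?F = "\<lambda>j. eval_bounded f s (j # xs)"
  from Mn.prems have "bounded_search ?F s = Suc (Suc y)" by simp
  then have found: "?F y = Suc 0" and before: "\<forall>i<y. 2 \<le> ?F i"
    by (auto simp: bounded_search_eq_iff)
  have "eval f (m # xs) (?F m - 1) \<and> ?F m - 1 \<noteq> 0" if "m < y" for m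
  proof -
    have "2 \<le> ?F m" using before that by blast
    then have "?F m = Suc (?F m - 1)" "?F m - 1 \<noteq> 0" by arith+
    then show ?thesis using Mn.IH by blast
  qed
  then show ?case using Mn.IH[OF found] by (intro eval_Mn) blast+
qed (simp add: eval_Zero)

lemma eventually_eval_bounded_iff:
  "eventually (\<lambda>s. eval_bounded f s xs = Suc y) sequentially \<longleftrightarrow> (\<exists>s. eval_bounded f s xs = Suc y)"
proof
  assume "\<exists>s. eval_bounded f s xs = Suc y"
  then obtain s where "eval_bounded f s xs = Suc y" by blast
  then show "eventually (\<lambda>s. eval_bounded f s xs = Suc y) sequentially"
    by (intro eventually_sequentiallyI[of s]) (rule eval_bounded_mono)
qed (auto simp: eventually_sequentially)

lemma eval_imp_eventually_eval_bounded:
  "eval f xs y \<Longrightarrow> eventually (\<lambda>s. eval_bounded f s xs = Suc y) sequentially"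
proof (induction rule: eval.induct)
  case (eval_Cn ys gs xs f z)
  have "eventually (\<lambda>s. \<forall>i\<in>{..<length gs}. eval_bounded (gs ! i) s xs = Suc (ys ! i)) sequentially"
    using eval_Cn.IH(1) by (intro eventually_ball_finite) auto
  then show ?case using eval_Cn.IH(2)
  proof eventually_elim
    case (elim s)
    then have "map (\<lambda>g. eval_bounded g s xs - 1) gs = ys"
      using eval_Cn.hyps(1) by (intro nth_equalityI) auto
    moreover have "\<forall>g\<in>set gs. eval_bounded g s xs \<noteq> 0"
      using elim(1) by (auto simp: in_set_conv_nth)
    ultimately show ?case using elim(2) by simp
  qed
next
  case (eval_PrS f g n xs y z)
  from eval_PrS.IH show ?case by eventually_elim simp
next
  case (eval_Mn f n xs)
  have "eventually (\<lambda>s. \<forall>m\<in>{..<n}. 2 \<le> eval_bounded f s (m # xs)) sequentially"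
  proof (intro eventually_ball_finite ballI)
    fix m assume "m \<in> {..<n}"
    then obtain v where "eventually (\<lambda>s. eval_bounded f s (m # xs) = Suc v) sequentially" "v \<noteq> 0"
      using eval_Mn.IH(2) by auto
    then show "eventually (\<lambda>s. 2 \<le> eval_bounded f s (m # xs)) sequentially"
      by (auto elim: eventually_mono)
  qed simp
  moreover note eval_Mn.IH(1)
  moreover have "eventually (\<lambda>s. n < s) sequentially" by simp
  ultimately show ?case
  proof eventually_elim
    case (elim s)
    then have "bounded_search (\<lambda>j. eval_bounded f s (j # xs)) s = Suc (Suc n)"
      by (simp add: bounded_search_eq_iff)
    then show ?case by simp
  qed
qed (simp_all add: eventually_eval_bounded_iff)

lemma eval_iff_eval_bounded: "eval f xs y \<longleftrightarrow> (\<exists>s. eval_bounded f s xs = Suc y)"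
  using eval_bounded_sound eval_imp_eventually_eval_bounded eventually_eval_bounded_iff by blast

section \<open>Total recursive functions and decidable predicates\<close>

definition computes :: "nat \<Rightarrow> recf \<Rightarrow> (nat list \<Rightarrow> nat) \<Rightarrow> bool" where
  "computes k g F \<longleftrightarrow> (\<forall>xs. length xs = k \<longrightarrow> eval g xs (F xs))"

definition total_rec :: "nat \<Rightarrow> (nat list \<Rightarrow> nat) \<Rightarrow> bool" where
  "total_rec k F \<longleftrightarrow> (\<exists>g. computes k g F)"

definition decidable :: "nat \<Rightarrow> (nat list \<Rightarrow> bool) \<Rightarrow> bool" where
  "decidable k P \<longleftrightarrow> total_rec k (\<lambda>xs. if P xs then 1 else 0)"

lemma total_rec_cong:
  "total_rec k F \<Longrightarrow> (\<And>xs. length xs = k \<Longrightarrow> F xs = G xs) \<Longrightarrow> total_rec k G"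
  unfolding total_rec_def computes_def by metis

lemma decidable_cong:
  "decidable k P \<Longrightarrow> (\<And>xs. length xs = k \<Longrightarrow> P xs = Q xs) \<Longrightarrow> decidable k Q"
  unfolding decidable_def by (erule total_rec_cong) simp

lemma total_rec_zero: "total_rec k (\<lambda>_. 0)"
  unfolding total_rec_def computes_def by (auto intro: eval_Zero)

lemma total_rec_nth: "i < k \<Longrightarrow> total_rec k (\<lambda>xs. xs ! i)"
  unfolding total_rec_def computes_def by (auto intro: eval_Proj)

lemma total_rec_hd: "total_rec (Suc k) hd"
  using total_rec_nth[of 0 "Suc k"] by (rule total_rec_cong) (auto simp: length_Suc_conv)

lemma total_rec_Suc: "total_rec k F \<Longrightarrow> total_rec k (\<lambda>xs. Suc (F xs))"
proof -
  assume "total_rec k F"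
  then obtain g where g: "\<And>xs. length xs = k \<Longrightarrow> eval g xs (F xs)"
    unfolding total_rec_def computes_def by blast
  have "eval (Cn Succ [g]) xs (Suc (F xs))" if "length xs = k" for xs
    by (rule eval_Cn[of "[F xs]"]) (auto intro: g that eval_Succ)
  then show ?thesis unfolding total_rec_def computes_def by blast
qed

lemma total_rec_const: "total_rec k (\<lambda>_. c)"
  by (induction c) (auto intro: total_rec_zero total_rec_Suc)

lemma total_rec_compose:
  assumes "total_rec m F" "length Gs = m" "\<forall>G\<in>set Gs. total_rec k G"
  shows "total_rec k (\<lambda>xs. F (map (\<lambda>G. G xs) Gs))"
proof -
  obtain f where f: "computes m f F" using assms(1) total_rec_def by blast
  have "\<forall>i. i < length Gs \<longrightarrow> (\<exists>g. computes k g (Gs ! i))"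
    using assms(3) unfolding total_rec_def by simp
  then obtain g where g: "\<forall>i<length Gs. computes k (g i) (Gs ! i)"
    unfolding choice_iff' by blast
  have "eval (Cn f (map g [0..<length Gs])) xs (F (map (\<lambda>G. G xs) Gs))" if "length xs = k" for xs
    by (rule eval_Cn[of "map (\<lambda>G. G xs) Gs"]) (use f g assms(2) that in \<open>auto simp: computes_def\<close>)
  then have "computes k (Cn f (map g [0..<length Gs])) (\<lambda>xs. F (map (\<lambda>G. G xs) Gs))"
    unfolding computes_def by blast
  then show ?thesis unfolding total_rec_def by blast
qed

lemma total_rec_nths:
  assumes "total_rec m F" "length L = m" "\<forall>i\<in>set L. i < k"
  shows "total_rec k (\<lambda>xs. F (map ((!) xs) L))"
  using total_rec_compose[of m F "map (\<lambda>i xs. xs ! i) L" k] assms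
  by (simp add: total_rec_nth comp_def)

lemma map_nth_upt_eq_drop: "length xs = k \<Longrightarrow> map ((!) xs) [j..<k] = drop j xs"
  by (rule nth_equalityI) auto

lemma total_rec_tl: "total_rec k F \<Longrightarrow> total_rec (Suc k) (\<lambda>xs. F (tl xs))"
  using total_rec_nths[of k F "[1..<Suc k]" "Suc k"]
  by (simp add: total_rec_cong map_nth_upt_eq_drop drop_Suc del: upt_Suc)

lemma total_rec_drop2: "total_rec k F \<Longrightarrow> total_rec (Suc (Suc k)) (\<lambda>xs. F (drop 2 xs))"
  using total_rec_tl[OF total_rec_tl, of k F] by (simp add: numeral_2_eq_2 drop_Suc)

lemma total_rec_rec_nat:
  assumes "total_rec k F" "total_rec (Suc (Suc k)) (\<lambda>zs. G (zs ! 0) (zs ! 1) (drop 2 zs))"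
    and "total_rec k N"
  shows "total_rec k (\<lambda>xs. rec_nat (F xs) (\<lambda>m p. G m p xs) (N xs))"
proof -
  obtain f g where f: "\<And>xs. length xs = k \<Longrightarrow> eval f xs (F xs)"
    and g: "\<And>zs. length zs = Suc (Suc k) \<Longrightarrow> eval g zs (G (zs ! 0) (zs ! 1) (drop 2 zs))"
    using assms(1,2) unfolding total_rec_def computes_def by blast
  have "eval (Pr f g) (n # xs) (rec_nat (F xs) (\<lambda>m p. G m p xs) n)" if "length xs = k" for n xs
  proof (induction n)
    case (Suc n)
    with g[of "n # rec_nat (F xs) (\<lambda>m p. G m p xs) n # xs"] that show ?case
      by (auto intro: eval_PrS)
  qed (simp add: f that eval_Pr0)
  then have "computes (Suc k) (Pr f g) (\<lambda>ys. rec_nat (F (tl ys)) (\<lambda>m p. G m p (tl ys)) (hd ys))"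
    unfolding computes_def by (metis length_Suc_conv list.sel(1,3))
  then have "total_rec (Suc k) (\<lambda>ys. rec_nat (F (tl ys)) (\<lambda>m p. G m p (tl ys)) (hd ys))"
    unfolding total_rec_def by blast
  then have "total_rec k (\<lambda>xs. (\<lambda>ys. rec_nat (F (tl ys)) (\<lambda>m p. G m p (tl ys)) (hd ys))
                (map (\<lambda>H. H xs) (N # map (\<lambda>i xs. xs ! i) [0..<k])))"
    using assms(3) by (intro total_rec_compose) (auto intro: total_rec_nth)
  then show ?thesis
    by (rule total_rec_cong) (simp add: comp_def map_nth_upt_eq_drop)
qed

lemma total_rec_add:
  assumes "total_rec k F" "total_rec k G"
  shows "total_rec k (\<lambda>xs. F xs + G xs)"
proof -
  have "total_rec k (\<lambda>xs. rec_nat (G xs) (\<lambda>m p. Suc p) (F xs))"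
    by (intro total_rec_rec_nat assms total_rec_Suc total_rec_nth) simp_all
  moreover have "rec_nat b (\<lambda>m p. Suc p) n = n + b" for b n :: nat
    by (induction n) simp_all
  ultimately show ?thesis by simp
qed

lemma total_rec_pred: "total_rec k F \<Longrightarrow> total_rec k (\<lambda>xs. F xs - 1)"
proof -
  assume F: "total_rec k F"
  have "total_rec k (\<lambda>xs. rec_nat 0 (\<lambda>m p. m) (F xs))"
    by (intro total_rec_rec_nat F total_rec_zero total_rec_nth) simp_all
  moreover have "rec_nat 0 (\<lambda>m p. m) n = n - 1" for n :: nat
    by (induction n) simp_all
  ultimately show ?thesis by simp
qed

lemma total_rec_diff:
  assumes "total_rec k F" "total_rec k G"
  shows "total_rec k (\<lambda>xs. F xs - G xs)"
proof -
  have "total_rec k (\<lambda>xs. rec_nat (F xs) (\<lambda>m p. p - 1) (G xs))"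
    by (intro total_rec_rec_nat assms total_rec_pred total_rec_nth) simp_all
  moreover have "rec_nat a (\<lambda>m p. p - 1) n = a - n" for a n :: nat
    by (induction n) simp_all
  ultimately show ?thesis by simp
qed

lemma total_rec_mult:
  assumes "total_rec k F" "total_rec k G"
  shows "total_rec k (\<lambda>xs. F xs * G xs)"
proof -
  have "total_rec k (\<lambda>xs. rec_nat 0 (\<lambda>m p. p + G xs) (F xs))"
    by (intro total_rec_rec_nat assms total_rec_zero total_rec_add total_rec_nth total_rec_drop2) simp_all
  moreover have "rec_nat 0 (\<lambda>m p. p + b) n = n * b" for b n :: nat
    by (induction n) simp_all
  ultimately show ?thesis by simp
qed

lemma decidable_const: "decidable k (\<lambda>_. b)"
  unfolding decidable_def by (simp add: total_rec_const)

lemma decidable_not: "decidable k P \<Longrightarrow> decidable k (\<lambda>xs. \<not> P xs)"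
  unfolding decidable_def
  by (drule total_rec_diff[OF total_rec_const[of k 1]]) (erule total_rec_cong, simp)

lemma decidable_conj: "decidable k P \<Longrightarrow> decidable k Q \<Longrightarrow> decidable k (\<lambda>xs. P xs \<and> Q xs)"
  unfolding decidable_def by (drule (1) total_rec_mult) (erule total_rec_cong, simp)

lemma decidable_disj: "decidable k P \<Longrightarrow> decidable k Q \<Longrightarrow> decidable k (\<lambda>xs. P xs \<or> Q xs)"
  using decidable_not[OF decidable_conj[OF decidable_not decidable_not]] by simp

lemma decidable_imp: "decidable k P \<Longrightarrow> decidable k Q \<Longrightarrow> decidable k (\<lambda>xs. P xs \<longrightarrow> Q xs)"
  using decidable_disj[OF decidable_not] by simp

lemma decidable_le: "total_rec k F \<Longrightarrow> total_rec k G \<Longrightarrow> decidable k (\<lambda>xs. F xs \<le> G xs)"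
  unfolding decidable_def
  by (rule total_rec_cong[where F = "\<lambda>xs. 1 - (F xs - G xs)"])
    (auto intro: total_rec_diff total_rec_const)

lemma decidable_less: "total_rec k F \<Longrightarrow> total_rec k G \<Longrightarrow> decidable k (\<lambda>xs. F xs < G xs)"
  using decidable_le[OF total_rec_Suc] by (simp add: Suc_le_eq)

lemma decidable_eq: "total_rec k F \<Longrightarrow> total_rec k G \<Longrightarrow> decidable k (\<lambda>xs. F xs = G xs)"
  using decidable_conj[OF decidable_le decidable_le] by (simp add: order_eq_iff)

lemma total_rec_if:
  assumes "decidable k P" "total_rec k F" "total_rec k G"
  shows "total_rec k (\<lambda>xs. if P xs then F xs else G xs)"
proof -
  let ?c = "\<lambda>xs. if P xs then 1 else 0 :: nat"
  have "total_rec k (\<lambda>xs. ?c xs * F xs + (1 - ?c xs) * G xs)"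
    using assms unfolding decidable_def
    by (intro total_rec_add total_rec_mult total_rec_diff total_rec_const)
  then show ?thesis by (rule total_rec_cong) simp
qed

lemma decidable_bex:
  assumes "decidable (Suc k) (\<lambda>zs. Q (hd zs) (tl zs))" "total_rec k N"
  shows "decidable k (\<lambda>xs. \<exists>i<N xs. Q i xs)"
proof -
  have "decidable (Suc (Suc k)) (\<lambda>zs. Q (zs ! 0) (drop 2 zs))"
    using total_rec_nths[OF assms(1)[unfolded decidable_def], of "0 # [2..<Suc (Suc k)]"]
    unfolding decidable_def
    by (rule total_rec_cong) (auto simp: map_nth_upt_eq_drop simp del: upt_Suc)
  then have "decidable (Suc (Suc k)) (\<lambda>zs. zs ! 1 \<noteq> 0 \<or> Q (zs ! 0) (drop 2 zs))"
    by (intro decidable_disj decidable_not decidable_eq total_rec_nth total_rec_const; simp)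
  then have "total_rec k (\<lambda>xs. rec_nat 0 (\<lambda>m p. if p \<noteq> 0 \<or> Q m xs then 1 else 0) (N xs))"
    unfolding decidable_def
    by (intro total_rec_rec_nat[where G = "\<lambda>m p xs. if p \<noteq> 0 \<or> Q m xs then 1 else 0"]
        total_rec_zero assms(2))
  moreover have "rec_nat 0 (\<lambda>m p. if p \<noteq> 0 \<or> Q m xs then 1 else 0) n
      = (if \<exists>i<n. Q i xs then 1 else (0::nat))" for n xs
    by (induction n) (auto simp: less_Suc_eq)
  ultimately show ?thesis unfolding decidable_def by simp
qed

lemma decidable_ball:
  "decidable (Suc k) (\<lambda>zs. Q (hd zs) (tl zs)) \<Longrightarrow> total_rec k N \<Longrightarrow> decidable k (\<lambda>xs. \<forall>i<N xs. Q i xs)"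
  using decidable_not[OF decidable_bex[OF decidable_not, of k Q N]] by simp

lemma decidable_all_nonzero: "\<forall>G\<in>set Gs. total_rec k G \<Longrightarrow> decidable k (\<lambda>xs. \<forall>G\<in>set Gs. G xs \<noteq> 0)"
proof (induction Gs)
  case (Cons G Gs)
  then have "decidable k (\<lambda>xs. G xs \<noteq> 0 \<and> (\<forall>G\<in>set Gs. G xs \<noteq> 0))"
    by (intro decidable_conj decidable_not decidable_eq total_rec_const) auto
  then show ?case by simp
qed (simp add: decidable_const)

section \<open>Coding of pairs and finite sets\<close>

lemma total_rec_triangle: "total_rec k F \<Longrightarrow> total_rec k (\<lambda>xs. triangle (F xs))"
proof -
  assume F: "total_rec k F"
  have "total_rec k (\<lambda>xs. rec_nat 0 (\<lambda>m p. Suc (p + m)) (F xs))"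
    by (intro total_rec_rec_nat F total_rec_zero total_rec_Suc total_rec_add total_rec_nth) simp_all
  moreover have "rec_nat 0 (\<lambda>m p. Suc (p + m)) n = triangle n" for n
    by (induction n) simp_all
  ultimately show ?thesis by simp
qed

lemma total_rec_prod_encode:
  "total_rec k F \<Longrightarrow> total_rec k G \<Longrightarrow> total_rec k (\<lambda>xs. prod_encode (F xs, G xs))"
  unfolding prod_encode_def by (simp add: total_rec_add total_rec_triangle)

text \<open>The largest \<open>r\<close> with \<open>triangle r \<le> c\<close>.\<close>

definition triangle_root :: "nat \<Rightarrow> nat" where
  "triangle_root c = rec_nat 0 (\<lambda>c' r. if triangle (Suc r) \<le> Suc c' then Suc r else r) c"

lemma triangle_root_bounds: "triangle (triangle_root c) \<le> c \<and> c - triangle (triangle_root c) \<le> triangle_root c"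
  by (induction c) (auto simp: triangle_root_def simp del: triangle_Suc, auto)

lemma prod_decode_eq_triangle_root:
  "prod_decode c = (c - triangle (triangle_root c), triangle_root c - (c - triangle (triangle_root c)))"
proof -
  let ?r = "triangle_root c"
  have "prod_decode c = prod_decode (triangle ?r + (c - triangle ?r))"
    using triangle_root_bounds[of c] by simp
  also have "\<dots> = prod_decode_aux ?r (c - triangle ?r)"
    by (rule prod_decode_triangle_add)
  also have "\<dots> = (c - triangle ?r, ?r - (c - triangle ?r))"
    using triangle_root_bounds[of c] by (simp add: prod_decode_aux.simps)
  finally show ?thesis .
qed

lemma total_rec_triangle_root: "total_rec k F \<Longrightarrow> total_rec k (\<lambda>xs. triangle_root (F xs))"
  unfolding triangle_root_def
  by (rule total_rec_rec_nat[OF total_rec_zero])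
    (auto intro!: total_rec_if decidable_le total_rec_triangle total_rec_Suc total_rec_nth
      simp del: triangle_Suc)

lemma total_rec_fst_prod_decode: "total_rec k F \<Longrightarrow> total_rec k (\<lambda>xs. fst (prod_decode (F xs)))"
  unfolding prod_decode_eq_triangle_root
  by (simp add: total_rec_diff total_rec_triangle total_rec_triangle_root)

lemma total_rec_snd_prod_decode: "total_rec k F \<Longrightarrow> total_rec k (\<lambda>xs. snd (prod_decode (F xs)))"
  unfolding prod_decode_eq_triangle_root
  by (simp add: total_rec_diff total_rec_triangle total_rec_triangle_root)

lemma total_rec_mod_2: "total_rec k F \<Longrightarrow> total_rec k (\<lambda>xs. F xs mod 2)"
proof -
  assume F: "total_rec k F"
  have "total_rec k (\<lambda>xs. rec_nat 0 (\<lambda>m p. 1 - p) (F xs))"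
    by (intro total_rec_rec_nat F total_rec_zero total_rec_diff total_rec_const total_rec_nth) simp_all
  moreover have "rec_nat 0 (\<lambda>m p. 1 - p) n = n mod 2" for n :: nat
    by (induction n) (auto simp: mod_Suc)
  ultimately show ?thesis by simp
qed

lemma total_rec_div_2: "total_rec k F \<Longrightarrow> total_rec k (\<lambda>xs. F xs div 2)"
proof -
  assume F: "total_rec k F"
  have "total_rec k (\<lambda>xs. rec_nat 0 (\<lambda>m q. q + m mod 2) (F xs))"
    by (intro total_rec_rec_nat F total_rec_zero total_rec_add total_rec_mod_2 total_rec_nth) simp_all
  moreover have "rec_nat 0 (\<lambda>m q. q + m mod 2) n = n div 2" for n :: nat
    by (induction n) (auto simp: div_Suc mod_Suc)
  ultimately show ?thesis by simp
qed

lemma total_rec_div_power_2: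
  assumes "total_rec k N" "total_rec k A"
  shows "total_rec k (\<lambda>xs. N xs div 2 ^ A xs)"
proof -
  have "total_rec k (\<lambda>xs. rec_nat (N xs) (\<lambda>m p. p div 2) (A xs))"
    by (intro total_rec_rec_nat assms total_rec_div_2 total_rec_nth) simp_all
  moreover have "rec_nat n (\<lambda>m p. p div 2) a = n div 2 ^ a" for n a :: nat
    by (induction a) (simp_all add: div_mult2_eq[symmetric] mult.commute)
  ultimately show ?thesis by simp
qed

lemma decidable_mem_set_decode:
  "total_rec k A \<Longrightarrow> total_rec k N \<Longrightarrow> decidable k (\<lambda>xs. A xs \<in> set_decode (N xs))"
  using decidable_eq[OF total_rec_mod_2[OF total_rec_div_power_2] total_rec_const, of k N A 1]
  by (simp add: set_decode_def odd_iff_mod_2_eq_one)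

lemma set_decode_less: "a \<in> set_decode n \<Longrightarrow> a < n"
proof (rule ccontr)
  assume "a \<in> set_decode n" "\<not> a < n"
  moreover have "n < 2 ^ a" using \<open>\<not> a < n\<close> less_exp[of a] by linarith
  ultimately show False by (simp add: set_decode_def)
qed

lemma set_decode_eq_empty_iff: "set_decode n = {} \<longleftrightarrow> n = 0"
  by (metis set_decode_inverse set_decode_zero set_encode_empty)

lemma decidable_ball_set_decode:
  assumes "decidable (Suc k) (\<lambda>zs. Q (hd zs) (tl zs))" "total_rec k N"
  shows "decidable k (\<lambda>xs. \<forall>a\<in>set_decode (N xs). Q a xs)"
proof -
  have "decidable k (\<lambda>xs. \<forall>a<N xs. a \<in> set_decode (N xs) \<longrightarrow> Q a xs)"
    by (intro decidable_ball decidable_imp decidable_mem_set_decode total_rec_hd total_rec_tl assms)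
  then show ?thesis by (rule decidable_cong) (auto dest: set_decode_less)
qed

lemma decidable_bex_set_decode:
  assumes "decidable (Suc k) (\<lambda>zs. Q (hd zs) (tl zs))" "total_rec k N"
  shows "decidable k (\<lambda>xs. \<exists>a\<in>set_decode (N xs). Q a xs)"
  using decidable_not[OF decidable_ball_set_decode[OF decidable_not[OF assms(1)] assms(2)]] by simp

lemma bounded_search_eq_rec_nat:
  "bounded_search F n = rec_nat 0 (\<lambda>j p. if p \<noteq> 0 then p
     else if F j = 1 then Suc (Suc j) else if F j = 0 then 1 else 0) n"
  by (induction n) simp_all

text \<open>Stated for arbitrary total recursive stage and argument functions, so that the
  induction hypothesis covers the shifted argument lists of the \<open>Pr\<close> and \<open>Mn\<close> cases.\<close>

lemma total_rec_eval_bounded: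
  assumes "total_rec k S" and "\<forall>A\<in>set As. total_rec k A"
  shows "total_rec k (\<lambda>xs. eval_bounded f (S xs) (map (\<lambda>A. A xs) As))"
  using assms
proof (induction f arbitrary: k S As)
  case Zero
  then show ?case by (simp add: total_rec_const)
next
  case Succ
  then show ?case by (cases As) (auto intro: total_rec_const total_rec_Suc)
next
  case (Proj i)
  show ?case
  proof (cases "i < length As")
    case True
    then have "total_rec k (\<lambda>xs. (As ! i) xs + 1)"
      using Proj.prems by (intro total_rec_add total_rec_const) simp
    then show ?thesis using True by simp
  qed (simp add: total_rec_zero)
next
  case (Cn f gs)
  let ?Gs = "map (\<lambda>g xs. eval_bounded g (S xs) (map (\<lambda>A. A xs) As)) gs"
  have Gs: "\<forall>G\<in>set ?Gs. total_rec k G" using Cn.IH(2) Cn.prems by auto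
  then have "total_rec k (\<lambda>xs. G xs - 1)" if "G \<in> set ?Gs" for G
    using that by (blast intro: total_rec_pred)
  then have "total_rec k (\<lambda>xs. eval_bounded f (S xs) (map (\<lambda>G. G xs) (map (\<lambda>G xs. G xs - 1) ?Gs)))"
    by (intro Cn.IH(1) Cn.prems(1)) auto
  then have "total_rec k (\<lambda>xs. if \<forall>G\<in>set ?Gs. G xs \<noteq> 0
      then eval_bounded f (S xs) (map (\<lambda>G. G xs) (map (\<lambda>G xs. G xs - 1) ?Gs)) else 0)"
    using Gs by (intro total_rec_if decidable_all_nonzero total_rec_zero)
  then show ?case by (simp add: comp_def cong: if_cong)
next
  case (Pr f g)
  show ?case
  proof (cases As)
    case Nil
    then show ?thesis by (simp add: total_rec_zero)
  next
    case (Cons N Bs)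
    have "total_rec k (\<lambda>xs. rec_nat (eval_bounded f (S xs) (map (\<lambda>B. B xs) Bs))
        (\<lambda>m p. if p = 0 then 0 else eval_bounded g (S xs) (m # (p - 1) # map (\<lambda>B. B xs) Bs)) (N xs))"
    proof (rule total_rec_rec_nat)
      have "total_rec (Suc (Suc k)) (\<lambda>zs. zs ! 1 - 1)"
        by (intro total_rec_pred total_rec_nth) simp
      then have "total_rec (Suc (Suc k)) (\<lambda>zs. eval_bounded g (S (drop 2 zs))
          (map (\<lambda>B. B zs) ((\<lambda>zs. zs ! 0) # (\<lambda>zs. zs ! 1 - 1) # map (\<lambda>B zs. B (drop 2 zs)) Bs)))"
        using Pr.prems Cons by (intro Pr.IH(2)) (auto intro: total_rec_drop2 total_rec_nth)
      then show "total_rec (Suc (Suc k)) (\<lambda>zs. if zs ! 1 = 0 then 0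
          else eval_bounded g (S (drop 2 zs)) (zs ! 0 # (zs ! 1 - 1) # map (\<lambda>B. B (drop 2 zs)) Bs))"
        by (intro total_rec_if decidable_eq total_rec_nth total_rec_const total_rec_zero)
          (simp_all add: comp_def)
    qed (use Pr.IH(1) Pr.prems Cons in auto)
    then show ?thesis using Cons by simp
  qed
next
  case (Mn f)
  let ?H = "\<lambda>j xs. eval_bounded f (S xs) (j # map (\<lambda>A. A xs) As)"
  have "total_rec (Suc (Suc k)) (\<lambda>zs. eval_bounded f (S (drop 2 zs))
      (map (\<lambda>B. B zs) ((\<lambda>zs. zs ! 0) # map (\<lambda>A zs. A (drop 2 zs)) As)))"
    using Mn.prems by (intro Mn.IH) (auto intro: total_rec_drop2 total_rec_nth)
  then have H: "total_rec (Suc (Suc k)) (\<lambda>zs. ?H (zs ! 0) (drop 2 zs))" by (simp add: comp_def)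
  have "total_rec k (\<lambda>xs. rec_nat 0 (\<lambda>j p. if p \<noteq> 0 then p
      else if ?H j xs = 1 then Suc (Suc j) else if ?H j xs = 0 then 1 else 0) (S xs))"
    by (intro total_rec_rec_nat[where G = "\<lambda>j p xs. if p \<noteq> 0 then p
          else if ?H j xs = 1 then Suc (Suc j) else if ?H j xs = 0 then 1 else 0"]
        total_rec_zero Mn.prems(1) total_rec_if decidable_not decidable_eq H total_rec_nth
        total_rec_const total_rec_Suc) simp_all
  then show ?case
    using total_rec_pred by (simp add: bounded_search_eq_rec_nat)
qed

lemma ce_set_of_decidable:
  assumes "decidable 2 P"
  shows "ce_set {n. \<exists>y. P [y, n]}"
proof -
  have "total_rec 2 (\<lambda>xs. if P xs then 0 else 1)"
    using decidable_not[OF assms] unfolding decidable_def by (rule total_rec_cong) simp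
  then obtain g where g: "computes 2 g (\<lambda>xs. if P xs then 0 else 1)"
    unfolding total_rec_def by blast
  then have g2: "eval g [y, n] (if P [y, n] then 0 else 1)" for y n
    unfolding computes_def by (simp add: numeral_2_eq_2)
  have "(\<exists>y. P [y, n]) \<longleftrightarrow> (\<exists>y. eval (Mn g) [n] y)" for n
  proof
    assume "\<exists>y. P [y, n]"
    let ?y = "LEAST y. P [y, n]"
    have "P [?y, n]" using \<open>\<exists>y. P [y, n]\<close> by (rule LeastI_ex)
    then have "eval g [?y, n] 0" using g2[of ?y n] by simp
    moreover have "\<forall>m<?y. \<exists>v. eval g [m, n] v \<and> v \<noteq> 0"
    proof (intro allI impI)
      fix m assume "m < ?y"
      then have "\<not> P [m, n]" by (rule not_less_Least)
      then show "\<exists>v. eval g [m, n] v \<and> v \<noteq> 0" using g2[of m n] by auto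
    qed
    ultimately have "eval (Mn g) [n] ?y" by (rule eval_Mn)
    then show "\<exists>y. eval (Mn g) [n] y" by blast
  next
    assume "\<exists>y. eval (Mn g) [n] y"
    then obtain y where "eval g [y, n] 0" by (blast elim: eval_MnE)
    then show "\<exists>y. P [y, n]"
      using eval_deterministic[OF g2] by (metis zero_neq_one)
  qed
  then show ?thesis unfolding ce_set_def by auto
qed

lemma computable_set_of_decidable: "decidable 1 P \<Longrightarrow> computable_set {n. P [n]}"
proof -
  assume "decidable 1 P"
  then obtain g where "\<And>xs. length xs = 1 \<Longrightarrow> eval g xs (if P xs then 1 else 0)"
    unfolding decidable_def total_rec_def computes_def by blast
  then have "eval g [n] (if n \<in> {n. P [n]} then 1 else 0)" for n by simp
  then show ?thesis unfolding computable_set_def by blast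
qed

lemma prod_encode_set_eq:
  "{prod_encode (a, b) | a b. Q a b} = {n. Q (fst (prod_decode n)) (snd (prod_decode n))}"
  by (auto, metis prod.collapse prod_decode_inverse)

lemma computable_rel_of_decidable:
  "decidable 1 (\<lambda>xs. S (fst (prod_decode (xs ! 0))) (snd (prod_decode (xs ! 0)))) \<Longrightarrow> computable_rel S"
  unfolding computable_rel_def rel_code_def prod_encode_set_eq
  by (drule computable_set_of_decidable) simp

lemma uniformly_ce_of_decidable:
  assumes "decidable 2 (\<lambda>xs. P (xs ! 0) (fst (prod_decode (xs ! 1))) (snd (prod_decode (xs ! 1))))"
    and "\<And>n m. m \<in> B n \<longleftrightarrow> (\<exists>t. P t n m)"
  shows "uniformly_ce B"
  unfolding uniformly_ce_def prod_encode_set_eq assms(2)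
  using ce_set_of_decidable[OF assms(1)] by simp

section \<open>Spaces of ideals\<close>

lemma is_ideal_finite_upper_bound:
  assumes "transitive_rel R" "is_ideal R I" "finite A" "A \<noteq> {}" "A \<subseteq> I"
  shows "\<exists>c\<in>I. \<forall>a\<in>A. R a c"
  using assms(3-5)
proof (induction A rule: finite_ne_induct)
  case (singleton a)
  then show ?case using assms(2) unfolding is_ideal_def by blast
next
  case (insert a A)
  then obtain c where "c \<in> I" "\<forall>b\<in>A. R b c" by auto
  moreover obtain d where "d \<in> I" "R a d" "R c d"
    using assms(2) insert.prems \<open>c \<in> I\<close> unfolding is_ideal_def by blast
  ultimately show ?case using assms(1) unfolding transitive_rel_def by blast
qed

lemma topspace_ideal_topology: "topspace (ideal_topology R) = ideals R"
  unfolding ideal_topology_def topology_generated_by_topspace basic_def ideals_def is_ideal_def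
  by blast

lemma continuous_map_of_computable_map:
  assumes "computable_map R S F" "F ` ideals R \<subseteq> ideals S"
  shows "continuous_map (ideal_topology R) (ideal_topology S) F"
proof -
  obtain B where B: "\<And>n. {I \<in> ideals R. F I \<in> basic S n} = (\<Union>i\<in>B n. basic R i)"
    using assms(1) unfolding computable_map_def by blast
  have topspace: "topspace (topology_generated_by (range (basic R))) = ideals R" for R
    using topspace_ideal_topology unfolding ideal_topology_def .
  show ?thesis
    unfolding ideal_topology_def
  proof (rule continuous_on_generated_topo)
    fix U assume "U \<in> range (basic S)"
    then obtain n where "U = basic S n" by blast
    then have "F -` U \<inter> topspace (topology_generated_by (range (basic R))) = (\<Union>i\<in>B n. basic R i)"
      using B[of n] unfolding topspace by auto
    then show "openin (topology_generated_by (range (basic R)))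
        (F -` U \<inter> topspace (topology_generated_by (range (basic R))))"
      by (auto intro: topology_generated_by_Basis)
  qed (use assms(2) topspace in \<open>simp add: topspace\<close>)
qed

lemma computably_homeomorphicI:
  assumes "computable_map R S F" "computable_map S R G"
    and "F ` ideals R \<subseteq> ideals S" "G ` ideals S \<subseteq> ideals R"
    and "\<And>I. I \<in> ideals R \<Longrightarrow> G (F I) = I" "\<And>J. J \<in> ideals S \<Longrightarrow> F (G J) = J"
  shows "computably_homeomorphic R S"
proof -
  have "homeomorphic_maps (ideal_topology R) (ideal_topology S) F G"
    unfolding homeomorphic_maps_def topspace_ideal_topology
    using assms by (simp add: continuous_map_of_computable_map)
  then show ?thesis using assms(1,2) unfolding computably_homeomorphic_def by blast
qed

section \<open>The order of finite approximations\<close>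

definition rel_at_stage :: "recf \<Rightarrow> nat \<Rightarrow> nat \<Rightarrow> nat \<Rightarrow> bool" where
  "rel_at_stage f t a b \<longleftrightarrow> eval_bounded f t [prod_encode (a, b)] \<noteq> 0"

lemma rel_at_stage_mono: "rel_at_stage f t a b \<Longrightarrow> t \<le> u \<Longrightarrow> rel_at_stage f u a b"
  unfolding rel_at_stage_def using eval_bounded_mono not0_implies_Suc by metis

lemma ex_rel_at_stage_iff: "(\<exists>t. rel_at_stage f t a b) \<longleftrightarrow> (\<exists>y. eval f [prod_encode (a, b)] y)"
proof
  assume "\<exists>t. rel_at_stage f t a b"
  then obtain t y where "eval_bounded f t [prod_encode (a, b)] = Suc y"
    unfolding rel_at_stage_def using not0_implies_Suc by blast
  then show "\<exists>y. eval f [prod_encode (a, b)] y" using eval_bounded_sound by blast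
next
  assume "\<exists>y. eval f [prod_encode (a, b)] y"
  then obtain t y where "eval_bounded f t [prod_encode (a, b)] = Suc y"
    using eval_iff_eval_bounded by blast
  then have "rel_at_stage f t a b" unfolding rel_at_stage_def by simp
  then show "\<exists>t. rel_at_stage f t a b" by blast
qed

lemma decidable_rel_at_stage:
  assumes "total_rec k T" "total_rec k A" "total_rec k B"
  shows "decidable k (\<lambda>xs. rel_at_stage f (T xs) (A xs) (B xs))"
proof -
  have "total_rec k (\<lambda>xs. eval_bounded f (T xs) (map (\<lambda>C. C xs) [\<lambda>xs. prod_encode (A xs, B xs)]))"
    using assms by (intro total_rec_eval_bounded) (auto intro: total_rec_prod_encode)
  then show ?thesis
    unfolding rel_at_stage_def by (intro decidable_not decidable_eq total_rec_const) simp
qed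

definition code_set :: "nat \<Rightarrow> nat set" where
  "code_set x = set_decode (fst (prod_decode x))"

definition code_stage :: "nat \<Rightarrow> nat" where
  "code_stage x = snd (prod_decode x)"

definition code :: "nat set \<Rightarrow> nat \<Rightarrow> nat" where
  "code A t = prod_encode (set_encode A, t)"

lemma code_set_code [simp]: "finite A \<Longrightarrow> code_set (code A t) = A"
  by (simp add: code_set_def code_def)

lemma code_stage_code [simp]: "code_stage (code A t) = t"
  by (simp add: code_stage_def code_def)

lemma finite_code_set [simp]: "finite (code_set x)"
  by (simp add: code_set_def)

text \<open>The fourth clause puts an upper bound of \<open>code_set x\<close> into \<open>code_set y\<close>, which makes
  \<open>unlift_ideal J\<close> directed; the last clause puts into \<open>code_set y\<close> everything that stage
  \<open>code_stage x\<close> sees below an element of \<open>code_set x\<close>, which makes it a lower set.\<close>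

definition approx_order :: "recf \<Rightarrow> nat \<Rightarrow> nat \<Rightarrow> bool" where
  "approx_order f x y \<longleftrightarrow> code_stage x < code_stage y \<and> code_set x \<noteq> {} \<and> code_set x \<subseteq> code_set y
     \<and> (\<exists>b\<in>code_set y. \<forall>a\<in>code_set x. rel_at_stage f (code_stage y) a b)
     \<and> (\<forall>a\<in>code_set x. \<forall>z\<le>code_stage x. rel_at_stage f (code_stage x) z a \<longrightarrow> z \<in> code_set y)"

lemma approx_order_code_set_subset: "approx_order f x y \<Longrightarrow> code_set x \<subseteq> code_set y"
  by (simp add: approx_order_def)

lemma approx_order_code_stage_less: "approx_order f x y \<Longrightarrow> code_stage x < code_stage y"
  by (simp add: approx_order_def)

lemma approx_order_of_smaller_code:
  assumes "code_set x \<noteq> {}" "code_set x \<subseteq> code_set y" "code_stage x \<le> code_stage y"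
    and "approx_order f y z"
  shows "approx_order f x z"
proof -
  obtain b where b: "b \<in> code_set z" "\<forall>a\<in>code_set y. rel_at_stage f (code_stage z) a b"
    using assms(4) unfolding approx_order_def by blast
  have closed: "\<forall>a\<in>code_set y. \<forall>w\<le>code_stage y. rel_at_stage f (code_stage y) w a \<longrightarrow> w \<in> code_set z"
    using assms(4) unfolding approx_order_def by blast
  show ?thesis
    unfolding approx_order_def
  proof (intro conjI)
    show "code_stage x < code_stage z"
      using assms(3) approx_order_code_stage_less[OF assms(4)] by simp
    show "code_set x \<subseteq> code_set z"
      using assms(2) approx_order_code_set_subset[OF assms(4)] by blast
    show "\<exists>b\<in>code_set z. \<forall>a\<in>code_set x. rel_at_stage f (code_stage z) a b"
      using b assms(2) by blast
    show "\<forall>a\<in>code_set x. \<forall>w\<le>code_stage x. rel_at_stage f (code_stage x) w a \<longrightarrow> w \<in> code_set z"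
      using closed assms(2,3) by (meson order_trans rel_at_stage_mono subsetD)
  qed (rule assms(1))
qed

lemma approx_order_trans: "approx_order f x y \<Longrightarrow> approx_order f y z \<Longrightarrow> approx_order f x z"
  by (rule approx_order_of_smaller_code) (simp_all add: approx_order_def)

lemma strict_partial_order_approx_order: "strict_partial_order (approx_order f)"
  unfolding strict_partial_order_def transitive_rel_def
  using approx_order_code_stage_less approx_order_trans by blast

lemma decidable_approx_order:
  assumes "total_rec k X" "total_rec k Y"
  shows "decidable k (\<lambda>xs. approx_order f (X xs) (Y xs))"
proof -
  let ?c = "\<lambda>X xs. fst (prod_decode (X xs))" and ?s = "\<lambda>X xs. snd (prod_decode (X xs))"
  have "decidable k (\<lambda>xs. ?s X xs < ?s Y xs \<and> ?c X xs \<noteq> 0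
      \<and> (\<forall>a\<in>set_decode (?c X xs). a \<in> set_decode (?c Y xs))
      \<and> (\<exists>b\<in>set_decode (?c Y xs). \<forall>a\<in>set_decode (?c X xs). rel_at_stage f (?s Y xs) a b)
      \<and> (\<forall>a\<in>set_decode (?c X xs). \<forall>z<Suc (?s X xs).
           rel_at_stage f (?s X xs) z a \<longrightarrow> z \<in> set_decode (?c Y xs)))"
    by (intro decidable_conj decidable_less decidable_not decidable_eq decidable_imp
        decidable_ball_set_decode decidable_bex_set_decode decidable_ball decidable_mem_set_decode
        decidable_rel_at_stage total_rec_fst_prod_decode total_rec_snd_prod_decode
        total_rec_hd total_rec_tl total_rec_Suc total_rec_const assms)
  then show ?thesis
    by (rule decidable_cong)
      (simp add: approx_order_def code_set_def code_stage_def set_decode_eq_empty_iff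
        less_Suc_eq_le subset_eq)
qed

lemma computable_rel_approx_order: "computable_rel (approx_order f)"
  by (intro computable_rel_of_decidable decidable_approx_order total_rec_fst_prod_decode
      total_rec_snd_prod_decode total_rec_nth) simp_all

definition lift_ideal :: "nat set \<Rightarrow> nat set" where
  "lift_ideal I = {x. code_set x \<noteq> {} \<and> code_set x \<subseteq> I}"

definition unlift_ideal :: "nat set \<Rightarrow> nat set" where
  "unlift_ideal J = (\<Union>x\<in>J. code_set x)"

lemma code_set_nonempty_if_approx_ideal:
  "is_ideal (approx_order f) J \<Longrightarrow> x \<in> J \<Longrightarrow> code_set x \<noteq> {}"
  unfolding is_ideal_def approx_order_def by blast

lemma approx_ideal_unbounded_stage:
  assumes "is_ideal (approx_order f) J" "x \<in> J"
  shows "\<exists>y\<in>J. approx_order f x y \<and> n \<le> code_stage y"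
proof (induction n)
  case 0
  then show ?case using assms unfolding is_ideal_def by blast
next
  case (Suc n)
  then obtain y where y: "y \<in> J" "approx_order f x y" "n \<le> code_stage y" by blast
  then obtain z where z: "z \<in> J" "approx_order f y z"
    using assms(1) unfolding is_ideal_def by blast
  then have "approx_order f x z" using y(2) approx_order_trans by blast
  moreover have "Suc n \<le> code_stage z" using y(3) approx_order_code_stage_less[OF z(2)] by simp
  ultimately show ?case using z(1) by blast
qed

lemma approx_ideal_finite_subset:
  assumes "is_ideal (approx_order f) J" "finite A" "A \<subseteq> unlift_ideal J"
  shows "\<exists>x\<in>J. A \<subseteq> code_set x"
  using assms(2,3)
proof (induction A rule: finite_induct)
  case empty
  then show ?case using assms(1) unfolding is_ideal_def by blast
next
  case (insert a A)
  then obtain x y where "x \<in> J" "A \<subseteq> code_set x" "y \<in> J" "a \<in> code_set y"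
    unfolding unlift_ideal_def by blast
  moreover obtain z where "z \<in> J" "approx_order f x z" "approx_order f y z"
    using assms(1) \<open>x \<in> J\<close> \<open>y \<in> J\<close> unfolding is_ideal_def by blast
  ultimately show ?case using approx_order_code_set_subset by blast
qed

lemma unlift_lift_ideal: "unlift_ideal (lift_ideal I) = I"
proof
  show "unlift_ideal (lift_ideal I) \<subseteq> I" unfolding unlift_ideal_def lift_ideal_def by blast
  show "I \<subseteq> unlift_ideal (lift_ideal I)"
  proof
    fix a assume "a \<in> I"
    then have "code {a} 0 \<in> lift_ideal I" by (simp add: lift_ideal_def)
    then show "a \<in> unlift_ideal (lift_ideal I)" unfolding unlift_ideal_def by force
  qed
qed

lemma lift_unlift_ideal:
  assumes J: "is_ideal (approx_order f) J"
  shows "lift_ideal (unlift_ideal J) = J"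
proof
  show "J \<subseteq> lift_ideal (unlift_ideal J)"
    unfolding lift_ideal_def unlift_ideal_def using code_set_nonempty_if_approx_ideal[OF J] by blast
next
  show "lift_ideal (unlift_ideal J) \<subseteq> J"
  proof
    fix x assume "x \<in> lift_ideal (unlift_ideal J)"
    then have x: "code_set x \<noteq> {}" "code_set x \<subseteq> unlift_ideal J"
      unfolding lift_ideal_def by auto
    obtain y where y: "y \<in> J" "code_set x \<subseteq> code_set y"
      using approx_ideal_finite_subset[OF J finite_code_set x(2)] by blast
    obtain y' where y': "y' \<in> J" "approx_order f y y'" "code_stage x \<le> code_stage y'"
      using approx_ideal_unbounded_stage[OF J y(1)] by blast
    obtain w where w: "w \<in> J" "approx_order f y' w"
      using J y'(1) unfolding is_ideal_def by blast
    have "code_set x \<subseteq> code_set y'" using y(2) approx_order_code_set_subset[OF y'(2)] by blast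
    with x(1) have "approx_order f x w" using y'(3) w(2) by (rule approx_order_of_smaller_code)
    then show "x \<in> J" using J w(1) unfolding is_ideal_def by blast
  qed
qed

section \<open>The computable homeomorphism\<close>

definition code_bounds :: "(nat \<Rightarrow> nat \<Rightarrow> bool) \<Rightarrow> nat \<Rightarrow> nat set" where
  "code_bounds R x = {c. code_set x \<noteq> {} \<and> (\<forall>a\<in>code_set x. R a c)}"

definition codes_containing :: "nat \<Rightarrow> nat set" where
  "codes_containing a = {x. a \<in> code_set x}"

lemma uniformly_ce_codes_containing: "uniformly_ce codes_containing"
  by (rule uniformly_ce_of_decidable[where P = "\<lambda>t a x. a \<in> set_decode (fst (prod_decode x))"])
    (intro decidable_mem_set_decode total_rec_fst_prod_decode total_rec_snd_prod_decode total_rec_nth,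
     simp_all add: codes_containing_def code_set_def)

locale ce_transitive_rel =
  fixes R :: "nat \<Rightarrow> nat \<Rightarrow> bool" and f :: recf
  assumes rel_code_iff_eval: "n \<in> rel_code R \<longleftrightarrow> (\<exists>y. eval f [n] y)"
    and transitive: "transitive_rel R"
begin

lemma rel_iff_ex_rel_at_stage: "R a b \<longleftrightarrow> (\<exists>t. rel_at_stage f t a b)"
  using rel_code_iff_eval[of "prod_encode (a, b)"]
  by (simp add: ex_rel_at_stage_iff rel_code_def prod_encode_set_eq)

lemma ex_stage_rel_at_stage_finite:
  assumes "finite A" "\<forall>a\<in>A. R a c"
  shows "\<exists>t. \<forall>a\<in>A. rel_at_stage f t a c"
proof -
  have "eventually (\<lambda>t. \<forall>a\<in>A. rel_at_stage f t a c) sequentially"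
  proof (intro eventually_ball_finite assms(1) ballI)
    fix a assume "a \<in> A"
    then obtain t where "rel_at_stage f t a c" using assms(2) rel_iff_ex_rel_at_stage by blast
    then show "eventually (\<lambda>t. rel_at_stage f t a c) sequentially"
      by (intro eventually_sequentiallyI[of t]) (rule rel_at_stage_mono)
  qed
  then show ?thesis unfolding eventually_sequentially by blast
qed

text \<open>The code \<open>w\<close> adds to \<open>A\<close> an upper bound \<open>c\<close> of \<open>A\<close>, recognised by stage \<open>t\<close>,
  and all elements that stage \<open>m\<close> puts below elements of \<open>A\<close>.\<close>

lemma lift_ideal_upper_bound:
  assumes I: "is_ideal R I" and A: "finite A" "A \<noteq> {}" "A \<subseteq> I"
  shows "\<exists>w\<in>lift_ideal I. \<forall>v. code_set v \<noteq> {} \<longrightarrow> code_set v \<subseteq> A \<longrightarrow> code_stage v \<le> m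
           \<longrightarrow> approx_order f v w"
proof -
  obtain c where c: "c \<in> I" "\<forall>a\<in>A. R a c"
    using is_ideal_finite_upper_bound[OF transitive I A] by blast
  obtain t where t: "\<forall>a\<in>A. rel_at_stage f t a c"
    using ex_stage_rel_at_stage_finite[OF A(1) c(2)] by blast
  define below where "below = {z. z \<le> m \<and> (\<exists>a\<in>A. rel_at_stage f m z a)}"
  define H where "H = A \<union> {c} \<union> below"
  define w where "w = code H (Suc (max t m))"
  have "finite H" unfolding H_def below_def using A(1) by (auto intro: finite_subset[of _ "{..m}"])
  then have code_w: "code_set w = H" "code_stage w = Suc (max t m)" by (simp_all add: w_def)
  have "below \<subseteq> I"
    using I A(3) rel_iff_ex_rel_at_stage unfolding below_def is_ideal_def by blast
  then have "w \<in> lift_ideal I" using A c(1) by (auto simp: lift_ideal_def code_w H_def)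
  moreover have "approx_order f v w"
    if v: "code_set v \<noteq> {}" "code_set v \<subseteq> A" "code_stage v \<le> m" for v
    unfolding approx_order_def code_w
  proof (intro conjI)
    have "rel_at_stage f (Suc (max t m)) a c" if "a \<in> code_set v" for a
      using t v(2) that rel_at_stage_mono by (meson le_SucI max.cobounded1 subsetD)
    then show "\<exists>b\<in>H. \<forall>a\<in>code_set v. rel_at_stage f (Suc (max t m)) a b"
      unfolding H_def by blast
    show "\<forall>a\<in>code_set v. \<forall>z\<le>code_stage v. rel_at_stage f (code_stage v) z a \<longrightarrow> z \<in> H"
      using v(2,3) by (auto simp: H_def below_def intro: rel_at_stage_mono)
  qed (use v in \<open>auto simp: H_def\<close>)
  ultimately show ?thesis by blast
qed

lemma is_ideal_lift_ideal:
  assumes I: "is_ideal R I"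
  shows "is_ideal (approx_order f) (lift_ideal I)"
  unfolding is_ideal_def
proof (intro conjI allI impI ballI)
  obtain a where "a \<in> I" using I unfolding is_ideal_def by blast
  then have "code {a} 0 \<in> lift_ideal I" by (simp add: lift_ideal_def)
  then show "lift_ideal I \<noteq> {}" by blast
next
  fix x y assume "x \<in> lift_ideal I" "approx_order f y x"
  then show "y \<in> lift_ideal I"
    unfolding lift_ideal_def approx_order_def by blast
next
  fix x y assume x: "x \<in> lift_ideal I" and y: "y \<in> lift_ideal I"
  then have "finite (code_set x \<union> code_set y)" "code_set x \<union> code_set y \<noteq> {}"
    "code_set x \<union> code_set y \<subseteq> I"
    unfolding lift_ideal_def by auto
  from lift_ideal_upper_bound[OF I this, where m = "max (code_stage x) (code_stage y)"]
  obtain w where w: "w \<in> lift_ideal I" and below_w: "\<forall>v. code_set v \<noteq> {}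
      \<longrightarrow> code_set v \<subseteq> code_set x \<union> code_set y \<longrightarrow> code_stage v \<le> max (code_stage x) (code_stage y)
      \<longrightarrow> approx_order f v w" ..
  have "approx_order f x w" "approx_order f y w"
    using below_w x y by (simp_all add: lift_ideal_def)
  then show "\<exists>w\<in>lift_ideal I. approx_order f x w \<and> approx_order f y w"
    using w by blast
qed

lemma is_ideal_unlift_ideal:
  assumes J: "is_ideal (approx_order f) J"
  shows "is_ideal R (unlift_ideal J)"
  unfolding is_ideal_def
proof (intro conjI allI impI ballI)
  obtain x where "x \<in> J" using J unfolding is_ideal_def by blast
  then show "unlift_ideal J \<noteq> {}"
    using code_set_nonempty_if_approx_ideal[OF J] unfolding unlift_ideal_def by blast
next
  fix a b assume "a \<in> unlift_ideal J" "R b a"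
  then obtain x t where x: "x \<in> J" "a \<in> code_set x" and t: "rel_at_stage f t b a"
    unfolding unlift_ideal_def using rel_iff_ex_rel_at_stage by blast
  obtain y where y: "y \<in> J" "approx_order f x y" "max t b \<le> code_stage y"
    using approx_ideal_unbounded_stage[OF J x(1)] by blast
  obtain z where z: "z \<in> J" "approx_order f y z"
    using J y(1) unfolding is_ideal_def by blast
  have "a \<in> code_set y" using x(2) approx_order_code_set_subset[OF y(2)] by blast
  moreover have "rel_at_stage f (code_stage y) b a" using t y(3) rel_at_stage_mono by simp
  ultimately have "b \<in> code_set z" using z(2) y(3) unfolding approx_order_def by simp
  then show "b \<in> unlift_ideal J" using z(1) unfolding unlift_ideal_def by blast
next
  fix a b assume "a \<in> unlift_ideal J" "b \<in> unlift_ideal J"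
  then obtain z where z: "z \<in> J" "a \<in> code_set z" "b \<in> code_set z"
    using approx_ideal_finite_subset[OF J, of "{a, b}"] by auto
  obtain w where w: "w \<in> J" "approx_order f z w"
    using J z(1) unfolding is_ideal_def by blast
  obtain c where "c \<in> code_set w" "\<forall>a\<in>code_set z. rel_at_stage f (code_stage w) a c"
    using w(2) unfolding approx_order_def by blast
  then show "\<exists>c\<in>unlift_ideal J. R a c \<and> R b c"
    using z w(1) rel_iff_ex_rel_at_stage unfolding unlift_ideal_def by blast
qed

lemma uniformly_ce_code_bounds: "uniformly_ce (code_bounds R)"
proof (rule uniformly_ce_of_decidable)
  show "decidable 2 (\<lambda>xs. fst (prod_decode (fst (prod_decode (xs ! 1)))) \<noteq> 0
      \<and> (\<forall>a\<in>set_decode (fst (prod_decode (fst (prod_decode (xs ! 1))))).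
           rel_at_stage f (xs ! 0) a (snd (prod_decode (xs ! 1)))))"
    by (intro decidable_conj decidable_not decidable_eq decidable_ball_set_decode
        decidable_rel_at_stage total_rec_fst_prod_decode total_rec_snd_prod_decode
        total_rec_hd total_rec_tl total_rec_nth total_rec_const) simp_all
  show "c \<in> code_bounds R x \<longleftrightarrow> (\<exists>t. fst (prod_decode x) \<noteq> 0
      \<and> (\<forall>a\<in>set_decode (fst (prod_decode x)). rel_at_stage f t a c))" for x c
    using ex_stage_rel_at_stage_finite[of "code_set x" c] rel_iff_ex_rel_at_stage
    by (auto simp: code_bounds_def code_set_def set_decode_eq_empty_iff)
qed

lemma computable_map_lift_ideal: "computable_map R (approx_order f) lift_ideal"
  unfolding computable_map_def
proof (intro exI conjI allI)
  fix x
  show "{I \<in> ideals R. lift_ideal I \<in> basic (approx_order f) x} = (\<Union>c\<in>code_bounds R x. basic R c)"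
  proof (intro set_eqI iffI)
    fix I assume "I \<in> {I \<in> ideals R. lift_ideal I \<in> basic (approx_order f) x}"
    then have I: "is_ideal R I" "code_set x \<noteq> {}" "code_set x \<subseteq> I"
      by (auto simp: ideals_def basic_def lift_ideal_def)
    then obtain c where "c \<in> I" "\<forall>a\<in>code_set x. R a c"
      using is_ideal_finite_upper_bound[OF transitive I(1) finite_code_set I(2,3)] by blast
    then show "I \<in> (\<Union>c\<in>code_bounds R x. basic R c)"
      using I by (auto simp: code_bounds_def basic_def ideals_def)
  next
    fix I assume "I \<in> (\<Union>c\<in>code_bounds R x. basic R c)"
    then have "is_ideal R I" "code_set x \<noteq> {}" "code_set x \<subseteq> I"
      by (auto simp: code_bounds_def basic_def ideals_def is_ideal_def)
    then show "I \<in> {I \<in> ideals R. lift_ideal I \<in> basic (approx_order f) x}"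
      using is_ideal_lift_ideal by (simp add: ideals_def basic_def lift_ideal_def)
  qed
qed (rule uniformly_ce_code_bounds)

lemma computable_map_unlift_ideal: "computable_map (approx_order f) R unlift_ideal"
  unfolding computable_map_def
proof (intro exI conjI allI)
  show "{J \<in> ideals (approx_order f). unlift_ideal J \<in> basic R a}
      = (\<Union>x\<in>codes_containing a. basic (approx_order f) x)" for a
    using is_ideal_unlift_ideal
    by (auto simp: ideals_def basic_def unlift_ideal_def codes_containing_def)
qed (rule uniformly_ce_codes_containing)

theorem computably_homeomorphic_approx_order: "computably_homeomorphic R (approx_order f)"
  by (rule computably_homeomorphicI[OF computable_map_lift_ideal computable_map_unlift_ideal])
    (auto simp: ideals_def is_ideal_lift_ideal is_ideal_unlift_ideal unlift_lift_ideal lift_unlift_ideal)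

end

theorem proposition2:
  fixes R :: "nat \<Rightarrow> nat \<Rightarrow> bool"
  assumes "ce_rel R" and "transitive_rel R"
  shows "\<exists>S. computable_rel S \<and> strict_partial_order S \<and> computably_homeomorphic R S"
proof -
  obtain f where "\<forall>n. n \<in> rel_code R \<longleftrightarrow> (\<exists>y. eval f [n] y)"
    using assms(1) unfolding ce_rel_def ce_set_def by blast
  then interpret ce_transitive_rel R f
    using assms(2) by unfold_locales blast+
  show ?thesis
    using computable_rel_approx_order strict_partial_order_approx_order
      computably_homeomorphic_approx_order by blast
qed

end
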